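(* For all rooted trees $u,v$ there exist a vector field $f$ and a quadratic functional $F$ on $Y=\mathbb R^{|u|+|v|}$ such that, for all rooted trees $\tau,\theta$, $F''\bigl(\tau(f)(0),\theta(f)(0)\bigr)\ne0$ if $(\tau,\theta)=(u,v)$ or $(\tau,\theta)=(v,u)$, and $F''\bigl(\tau(f)(0),\theta(f)(0)\bigr)=0$ otherwise.
   Context: Rooted trees: $\bullet$ is the one-vertex tree and $[\tau_1,\ldots,\tau_m]$ is the tree whose root has children that are the roots of subtrees $\tau_1,\ldots,\tau_m$ (unordered); $|\tau|$ is the number of vertices. Elementary differentials of a smooth vector field $f$: $\bullet(f)=f$, $[\tau_1,\ldots,\tau_m](f)=f^{(m)}\bigl(\tau_1(f),\ldots,\tau_m(f)\bigr)$ with $f^{(m)}$ the $m$-th derivative. A quadratic functional is a homogeneous quadratic polynomial $F\colon Y\to\mathbb R$; its Hessian $F''$ is a constant symmetric bilinear form. *)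

theory Defs
  imports "HOL-Analysis.Analysis" "HOL-Library.Multiset" "HOL-Combinatorics.Multiset_Permutations"
begin

(* Unordered rooted trees: a node with a multiset of children.
   Node {#} is the one-vertex tree, Node {#t1,...,tm#} is [t1,...,tm]. *)
datatype tree = Node "tree multiset"

primrec tsize :: "tree \<Rightarrow> nat" where
  "tsize (Node M) = 1 + sum_mset (image_mset tsize M)"

definition ddir :: "('a::real_normed_vector \<Rightarrow> 'b::real_normed_vector) \<Rightarrow> 'a \<Rightarrow> 'a \<Rightarrow> 'b" where
  "ddir g v = (\<lambda>x. frechet_derivative g (at x) v)"

(* iterated derivative: nderiv f [v1,...,vm] x = f^(m)(x)(v1,...,vm) *)
fun nderiv :: "('a::real_normed_vector \<Rightarrow> 'b::real_normed_vector) \<Rightarrow> 'a list \<Rightarrow> 'a \<Rightarrow> 'b" where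
  "nderiv f [] = f"
| "nderiv f (v # vs) = ddir (nderiv f vs) v"

definition smooth :: "('a::real_normed_vector \<Rightarrow> 'b::real_normed_vector) \<Rightarrow> bool" where
  "smooth f \<longleftrightarrow> (\<forall>vs x. nderiv f vs differentiable (at x))"

(* m-th derivative applied to an (unordered) multiset of arguments; for smooth f the
   derivative is symmetric, so this average over orderings equals f^(m)(x)(v1,...,vm) *)
definition mderiv :: "('a::real_normed_vector \<Rightarrow> 'b::real_normed_vector) \<Rightarrow> 'a \<Rightarrow> 'a multiset \<Rightarrow> 'b" where
  "mderiv f x M = scaleR (1 / real (card (permutations_of_multiset M)))
                    (\<Sum>L\<in>permutations_of_multiset M. nderiv f L x)"

primrec elem_diff :: "tree \<Rightarrow> ('a::real_normed_vector \<Rightarrow> 'a) \<Rightarrow> 'a \<Rightarrow> 'a" where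
  "elem_diff (Node M) f x = mderiv f x (image_mset (\<lambda>t. elem_diff t f x) M)"

definition quadratic_functional :: "(real ^ 'n \<Rightarrow> real) \<Rightarrow> bool" where
  "quadratic_functional F \<longleftrightarrow> (\<exists>A :: 'n \<Rightarrow> 'n \<Rightarrow> real. \<forall>y. F y = (\<Sum>i\<in>UNIV. \<Sum>j\<in>UNIV. A i j * y$i * y$j))"

(* Hessian F''(a,b) (constant for a quadratic functional; evaluated at 0) *)
definition hessian :: "(real ^ 'n \<Rightarrow> real) \<Rightarrow> real ^ 'n \<Rightarrow> real ^ 'n \<Rightarrow> real" where
  "hessian F a b = nderiv F [a, b] 0"

end

theory Submission
  imports Defs
begin

(* Index the subtrees of u and v injectively by coordinates (there are at most |u| + |v| of them)
   and let the component of f at the index of s = [c_1, ..., c_m] be the monomial y_c_1 ... y_c_m.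
   The m-th derivative of a monomial at 0 is a sum of products of coordinates of its arguments, so
   for arguments that are nonnegative on the relevant coordinates it is nonnegative, and positive
   exactly when the arguments can be matched with the variables of the monomial. By induction on
   tau, the coordinate of tau(f)(0) at the index of a subtree s is therefore nonnegative, and
   positive iff tau = s. With F(y) = y_u y_v we get F''(a, b) = a_u b_v + a_v b_u, a sum of two
   nonnegative terms that vanishes unless (tau, theta) is (u, v) or (v, u). *)

lemma
  fixes f :: "'a \<Rightarrow> 'b::ordered_cancel_comm_monoid_add"
  assumes "\<And>x. x \<in># M \<Longrightarrow> 0 \<le> f x"
  shows sum_mset_nonneg: "0 \<le> (\<Sum>x\<in>#M. f x)"
    and sum_mset_pos_iff: "0 < (\<Sum>x\<in>#M. f x) \<longleftrightarrow> (\<exists>x\<in>#M. 0 < f x)"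
  using assms by (induction M) (auto intro: add_nonneg_nonneg add_pos_nonneg add_nonneg_pos)

lemma rel_mset_add_mset_left_iff:
  "rel_mset R (add_mset a M) N \<longleftrightarrow> (\<exists>b\<in>#N. R a b \<and> rel_mset R M (N - {#b#}))"
proof
  assume "rel_mset R (add_mset a M) N"
  then show "\<exists>b\<in>#N. R a b \<and> rel_mset R M (N - {#b#})"
    by (auto dest: msed_rel_invL)
next
  assume "\<exists>b\<in>#N. R a b \<and> rel_mset R M (N - {#b#})"
  then show "rel_mset R (add_mset a M) N"
    by (metis insert_DiffM rel_mset_Plus)
qed

lemma card_UN_mset_le: "card (\<Union>x\<in>set_mset M. A x) \<le> (\<Sum>x\<in>#M. card (A x))"
proof (induction M)
  case (add x M)
  then show ?case
    using card_Un_le[of "A x" "\<Union>x\<in>set_mset M. A x"] by simp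
qed simp

lemma add_mult_nonneg_eq_0_iff:
  fixes x y z w :: "'a::linordered_idom"
  assumes "0 \<le> x" "0 \<le> y" "0 \<le> z" "0 \<le> w"
  shows "x * y + z * w = 0 \<longleftrightarrow> (x = 0 \<or> y = 0) \<and> (z = 0 \<or> w = 0)"
  using assms by (simp add: add_nonneg_eq_0_iff)

lemma ddir_eq_derivative:
  assumes "\<And>x. (f has_derivative f' x) (at x)"
  shows "ddir f v = (\<lambda>x. f' x v)"
  unfolding ddir_def using frechet_derivative_at[OF assms] by simp

lemma nderiv_snoc: "nderiv f (vs @ [v]) = nderiv (ddir f v) vs"
  by (induction vs) simp_all

lemma has_derivative_sum_mset:
  assumes "\<And>i. i \<in># A \<Longrightarrow> (g i has_derivative g' i) F"
  shows "((\<lambda>x. \<Sum>i\<in>#A. g i x) has_derivative (\<lambda>h. \<Sum>i\<in>#A. g' i h)) F"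
  using assms by (induction A) (auto intro: has_derivative_add)

lemma
  fixes g :: "'i \<Rightarrow> 'a::real_normed_vector \<Rightarrow> 'b::real_normed_vector"
  assumes "\<And>i. i \<in># A \<Longrightarrow> smooth (g i)"
  shows nderiv_lincomb: "nderiv (\<lambda>x. \<Sum>i\<in>#A. c i *\<^sub>R g i x) vs = (\<lambda>x. \<Sum>i\<in>#A. c i *\<^sub>R nderiv (g i) vs x)"
    and smooth_lincomb: "smooth (\<lambda>x. \<Sum>i\<in>#A. c i *\<^sub>R g i x)"
proof -
  have deriv: "((\<lambda>x. \<Sum>i\<in>#A. c i *\<^sub>R nderiv (g i) vs x) has_derivative
      (\<lambda>h. \<Sum>i\<in>#A. c i *\<^sub>R frechet_derivative (nderiv (g i) vs) (at x) h)) (at x)" for vs x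
    using assms unfolding smooth_def
    by (intro has_derivative_sum_mset has_derivative_scaleR_right frechet_derivative_works[THEN iffD1]) blast
  show nderiv_eq: "nderiv (\<lambda>x. \<Sum>i\<in>#A. c i *\<^sub>R g i x) vs = (\<lambda>x. \<Sum>i\<in>#A. c i *\<^sub>R nderiv (g i) vs x)" for vs
    by (induction vs) (simp_all add: ddir_eq_derivative[OF deriv] ddir_def)
  show "smooth (\<lambda>x. \<Sum>i\<in>#A. c i *\<^sub>R g i x)"
    unfolding smooth_def nderiv_eq differentiable_def using deriv by blast
qed

lemma has_derivative_vec_lambda:
  fixes g :: "'i::finite \<Rightarrow> 'a::real_normed_vector \<Rightarrow> real"
  assumes "\<And>i. (g i has_derivative g' i) (at x)"
  shows "((\<lambda>x. \<chi> i. g i x) has_derivative (\<lambda>h. \<chi> i. g' i h)) (at x)"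
proof (rule has_derivative_componentwise_within[THEN iffD2], intro ballI)
  fix b :: "real ^ 'i"
  assume "b \<in> Basis"
  then obtain j where "b = axis j 1"
    by (auto simp: Basis_vec_def)
  then show "((\<lambda>x. (\<chi> i. g i x) \<bullet> b) has_derivative (\<lambda>h. (\<chi> i. g' i h) \<bullet> b)) (at x)"
    using assms by (simp add: inner_axis)
qed

lemma
  fixes g :: "'i::finite \<Rightarrow> 'a::real_normed_vector \<Rightarrow> real"
  assumes "\<And>i. smooth (g i)"
  shows nderiv_vec_lambda: "nderiv (\<lambda>x. \<chi> i. g i x) vs = (\<lambda>x. \<chi> i. nderiv (g i) vs x)"
    and smooth_vec_lambda: "smooth (\<lambda>x. \<chi> i. g i x)"
proof -
  have deriv: "((\<lambda>x. \<chi> i. nderiv (g i) vs x) has_derivative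
      (\<lambda>h. \<chi> i. frechet_derivative (nderiv (g i) vs) (at x) h)) (at x)" for vs x
    using assms unfolding smooth_def by (intro has_derivative_vec_lambda frechet_derivative_works[THEN iffD1]) blast
  show nderiv_eq: "nderiv (\<lambda>x. \<chi> i. g i x) vs = (\<lambda>x. \<chi> i. nderiv (g i) vs x)" for vs
    by (induction vs) (simp_all add: ddir_eq_derivative[OF deriv] ddir_def)
  show "smooth (\<lambda>x. \<chi> i. g i x)"
    unfolding smooth_def nderiv_eq differentiable_def using deriv by blast
qed

lemma mderiv_vec_lambda:
  fixes g :: "'i::finite \<Rightarrow> 'a::real_normed_vector \<Rightarrow> real"
  assumes "\<And>i. smooth (g i)"
  shows "mderiv (\<lambda>x. \<chi> i. g i x) x M $ i = mderiv (g i) x M"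
  by (simp add: mderiv_def nderiv_vec_lambda[OF assms] sum_component)

definition monomial :: "'i multiset \<Rightarrow> real ^ 'i \<Rightarrow> real" where
  "monomial B x = (\<Prod>i\<in>#B. x $ i)"

lemma monomial_at_0: "monomial B 0 = (if B = {#} then 1 else 0)"
  by (cases B) (simp_all add: monomial_def)

lemma has_derivative_monomial:
  "(monomial B has_derivative (\<lambda>h. \<Sum>i\<in>#B. h $ i * monomial (B - {#i#}) x)) (at x)"
proof (induction B)
  case empty
  then show ?case by (simp add: monomial_def[abs_def])
next
  case (add j B)
  have "(\<Sum>i\<in>#B. h $ i * monomial (add_mset j B - {#i#}) x)
      = x $ j * (\<Sum>i\<in>#B. h $ i * monomial (B - {#i#}) x)" for h
    unfolding sum_mset_distrib_left
    by (intro arg_cong[where f = sum_mset] image_mset_cong) (simp add: monomial_def diff_union_single_conv)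
  moreover have "monomial (add_mset j B) = (\<lambda>y. y $ j * monomial B y)"
    by (simp add: monomial_def[abs_def])
  moreover have "((\<lambda>y. y $ j) has_derivative (\<lambda>h. h $ j)) (at x)"
    using bounded_linear_vec_nth by (rule bounded_linear_imp_has_derivative)
  ultimately show ?case
    using has_derivative_mult[OF _ add.IH] by (simp add: add.commute)
qed

lemma ddir_monomial: "ddir (monomial B) v = (\<lambda>x. \<Sum>i\<in>#B. v $ i *\<^sub>R monomial (B - {#i#}) x)"
  using ddir_eq_derivative[OF has_derivative_monomial] by simp

lemma smooth_monomial: "smooth (monomial B)"
proof (induction "size B" arbitrary: B rule: less_induct)
  case less
  have "nderiv (monomial B) vs differentiable at x" for vs x
  proof (cases vs rule: rev_cases)
    case Nil
    then show ?thesis using has_derivative_monomial by (auto simp: differentiable_def)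
  next
    case (snoc ws v)
    have "smooth (ddir (monomial B) v)"
      unfolding ddir_monomial by (intro smooth_lincomb less) (simp add: size_Diff1_less)
    then show ?thesis by (simp add: snoc nderiv_snoc smooth_def)
  qed
  then show ?case by (simp add: smooth_def)
qed

lemma nderiv_monomial_snoc:
  "nderiv (monomial B) (vs @ [v]) = (\<lambda>x. \<Sum>i\<in>#B. v $ i * nderiv (monomial (B - {#i#})) vs x)"
  unfolding nderiv_snoc ddir_monomial nderiv_lincomb[OF smooth_monomial] by simp

lemma nderiv_monomial_at_0:
  assumes "\<And>w i. w \<in> set vs \<Longrightarrow> i \<in># B \<Longrightarrow> 0 \<le> w $ i"
  shows "0 \<le> nderiv (monomial B) vs 0 \<and>
    (0 < nderiv (monomial B) vs 0 \<longleftrightarrow> rel_mset (\<lambda>w i. 0 < w $ i) (mset vs) B)"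
  using assms
proof (induction vs arbitrary: B rule: rev_induct)
  case Nil
  then show ?case by (simp add: monomial_at_0)
next
  case (snoc v vs)
  have IH: "0 \<le> nderiv (monomial (B - {#i#})) vs 0 \<and>
    (0 < nderiv (monomial (B - {#i#})) vs 0 \<longleftrightarrow> rel_mset (\<lambda>w i. 0 < w $ i) (mset vs) (B - {#i#}))" for i
    using snoc.prems by (intro snoc.IH) (auto dest: in_diffD)
  have terms_nonneg: "0 \<le> v $ i * nderiv (monomial (B - {#i#})) vs 0" if "i \<in># B" for i
    using IH snoc.prems that by simp
  have expand: "nderiv (monomial B) (vs @ [v]) 0 = (\<Sum>i\<in>#B. v $ i * nderiv (monomial (B - {#i#})) vs 0)"
    by (simp add: nderiv_monomial_snoc)
  have term_pos_iff: "0 < v $ i * nderiv (monomial (B - {#i#})) vs 0 \<longleftrightarrow>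
      0 < v $ i \<and> rel_mset (\<lambda>w i. 0 < w $ i) (mset vs) (B - {#i#})" if "i \<in># B" for i
    using IH[of i] snoc.prems[of v i] that by (auto simp: zero_less_mult_iff)
  have "0 < nderiv (monomial B) (vs @ [v]) 0 \<longleftrightarrow> (\<exists>i\<in>#B. 0 < v $ i * nderiv (monomial (B - {#i#})) vs 0)"
    unfolding expand by (rule sum_mset_pos_iff) (rule terms_nonneg)
  also have "\<dots> \<longleftrightarrow> (\<exists>i\<in>#B. 0 < v $ i \<and> rel_mset (\<lambda>w i. 0 < w $ i) (mset vs) (B - {#i#}))"
    using term_pos_iff by blast
  also have "\<dots> \<longleftrightarrow> rel_mset (\<lambda>w i. 0 < w $ i) (mset (vs @ [v])) B"
    by (simp add: rel_mset_add_mset_left_iff)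
  finally have "0 < nderiv (monomial B) (vs @ [v]) 0 \<longleftrightarrow> rel_mset (\<lambda>w i. 0 < w $ i) (mset (vs @ [v])) B" .
  moreover have "0 \<le> nderiv (monomial B) (vs @ [v]) 0"
    unfolding expand by (rule sum_mset_nonneg) (rule terms_nonneg)
  ultimately show ?case by blast
qed

lemma mderiv_monomial_at_0:
  assumes "\<And>w i. w \<in># M \<Longrightarrow> i \<in># B \<Longrightarrow> 0 \<le> w $ i"
  shows "0 \<le> mderiv (monomial B) 0 M \<and>
    (0 < mderiv (monomial B) 0 M \<longleftrightarrow> rel_mset (\<lambda>w i. 0 < w $ i) M B)"
proof -
  let ?Ls = "permutations_of_multiset M"
  have terms: "0 \<le> nderiv (monomial B) L 0 \<and>
      (0 < nderiv (monomial B) L 0 \<longleftrightarrow> rel_mset (\<lambda>w i. 0 < w $ i) M B)" if "L \<in> ?Ls" for L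
    using nderiv_monomial_at_0[of L B] assms permutations_of_multisetD[OF that] by auto
  have "0 < (\<Sum>L\<in>?Ls. nderiv (monomial B) L 0) \<longleftrightarrow> rel_mset (\<lambda>w i. 0 < w $ i) M B"
  proof (cases "rel_mset (\<lambda>w i. 0 < w $ i) M B")
    case True
    then show ?thesis using terms by (simp add: sum_pos)
  next
    case False
    then have "nderiv (monomial B) L 0 = 0" if "L \<in> ?Ls" for L
      using terms[OF that] by simp
    then show ?thesis using False by simp
  qed
  moreover have "0 \<le> (\<Sum>L\<in>?Ls. nderiv (monomial B) L 0)"
    using terms by (simp add: sum_nonneg)
  moreover have "mderiv (monomial B) 0 M = (\<Sum>L\<in>?Ls. nderiv (monomial B) L 0) / card ?Ls"
    by (simp add: mderiv_def)
  moreover have "0 < card ?Ls"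
    by (simp add: card_gt_0_iff)
  ultimately show ?thesis
    by (simp add: zero_le_divide_iff zero_less_divide_iff)
qed

lemma hessian_monomial_pair: "hessian (monomial {#p, q#}) a b = a $ p * b $ q + a $ q * b $ p"
  using nderiv_monomial_snoc[of "{#p, q#}" "[a]" b] nderiv_monomial_snoc[of _ "[]" a]
  by (simp add: hessian_def monomial_def)

lemma quadratic_functional_monomial_pair:
  fixes p q :: "'i::finite"
  shows "quadratic_functional (monomial {#p, q#})"
  unfolding quadratic_functional_def
proof (intro exI allI)
  fix y :: "real ^ 'i"
  have "(\<Sum>i\<in>UNIV. \<Sum>j\<in>UNIV. (if i = p \<and> j = q then 1 else 0) * y $ i * y $ j)
      = (\<Sum>i\<in>UNIV. if i = p then y $ p * y $ q else 0)"
    by (intro sum.cong refl) (auto simp: if_distrib[of "\<lambda>c. c * _"] sum.delta cong: if_cong)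
  then show "monomial {#p, q#} y = (\<Sum>i\<in>UNIV. \<Sum>j\<in>UNIV. (if i = p \<and> j = q then 1 else 0) * y $ i * y $ j)"
    by (simp add: monomial_def)
qed

definition monomial_field :: "('i::finite \<Rightarrow> 'i multiset) \<Rightarrow> real ^ 'i \<Rightarrow> real ^ 'i" where
  "monomial_field B x = (\<chi> i. monomial (B i) x)"

lemma smooth_monomial_field: "smooth (monomial_field B)"
  unfolding monomial_field_def[abs_def] by (intro smooth_vec_lambda smooth_monomial)

lemma mderiv_monomial_field: "mderiv (monomial_field B) x M $ i = mderiv (monomial (B i)) x M"
  unfolding monomial_field_def[abs_def] by (intro mderiv_vec_lambda smooth_monomial)

primrec subtrees :: "tree \<Rightarrow> tree set" where
  "subtrees (Node M) = insert (Node M) (\<Union> (set_mset (image_mset subtrees M)))"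

lemma subtrees_refl: "t \<in> subtrees t"
  by (cases t) simp

lemma finite_subtrees: "finite (subtrees t)"
  by (induction t) auto

lemma subtrees_child_closed: "Node C \<in> subtrees t \<Longrightarrow> c \<in># C \<Longrightarrow> c \<in> subtrees t"
proof (induction t)
  case (Node M)
  show ?case
  proof (cases "C = M")
    case True
    then show ?thesis using Node.prems subtrees_refl[of c] by auto
  next
    case False
    then obtain t where "t \<in># M" "Node C \<in> subtrees t" using Node.prems by auto
    then show ?thesis using Node.IH Node.prems by auto
  qed
qed

lemma card_subtrees_le: "card (subtrees t) \<le> tsize t"
proof (induction t)
  case (Node M)
  have "card (subtrees (Node M)) \<le> 1 + card (\<Union>t\<in>set_mset M. subtrees t)"
    by (simp add: card_insert_le_m1 card_insert_if)
  also have "\<dots> \<le> 1 + (\<Sum>t\<in>#M. card (subtrees t))"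
    using card_UN_mset_le by simp
  also have "\<dots> \<le> tsize (Node M)"
    using Node.IH by (simp add: sum_mset_mono)
  finally show ?case .
qed

lemma elem_diff_monomial_field_at_0:
  fixes idx :: "tree \<Rightarrow> 'i::finite"
  assumes closed: "\<And>C c. Node C \<in> S \<Longrightarrow> c \<in># C \<Longrightarrow> c \<in> S"
    and B_Node: "\<And>C. Node C \<in> S \<Longrightarrow> B (idx (Node C)) = image_mset idx C"
    and "s \<in> S"
  shows "0 \<le> elem_diff \<tau> (monomial_field B) 0 $ idx s \<and>
    (0 < elem_diff \<tau> (monomial_field B) 0 $ idx s \<longleftrightarrow> \<tau> = s)"
  using \<open>s \<in> S\<close>
proof (induction \<tau> arbitrary: s)
  case (Node N)
  let ?x = "\<lambda>t. elem_diff t (monomial_field B) 0"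
  obtain C where s: "s = Node C" by (cases s)
  have children_in_S: "c \<in> S" if "c \<in># C" for c
    using closed Node.prems that unfolding s by blast
  have coordinate: "?x (Node N) $ idx s = mderiv (monomial (image_mset idx C)) 0 (image_mset ?x N)"
    using B_Node Node.prems by (simp add: s mderiv_monomial_field)
  have "rel_mset (\<lambda>w i. 0 < w $ i) (image_mset ?x N) (image_mset idx C) \<longleftrightarrow> rel_mset (=) N C"
    unfolding multiset.rel_map
  proof (intro iffI; elim multiset.rel_mono_strong)
    show "t = c" if "t \<in> set_mset N" "c \<in> set_mset C" "0 < ?x t $ idx c" for t c
      using Node.IH that children_in_S by blast
    show "0 < ?x t $ idx c" if "t \<in> set_mset N" "c \<in> set_mset C" "t = c" for t c
      using Node.IH that children_in_S by blast
  qed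
  moreover have "0 \<le> w $ i" if "w \<in># image_mset ?x N" "i \<in># image_mset idx C" for w i
    using Node.IH that children_in_S by auto
  ultimately show ?case
    unfolding coordinate using mderiv_monomial_at_0[of "image_mset ?x N" "image_mset idx C"]
    by (simp add: s multiset.rel_eq)
qed

theorem lemmaA2:
  fixes u v :: tree
  assumes "CARD('n::finite) = tsize u + tsize v"
  shows "\<exists>(f :: real ^ 'n \<Rightarrow> real ^ 'n) (F :: real ^ 'n \<Rightarrow> real).
           smooth f \<and> quadratic_functional F \<and>
           (\<forall>\<tau> \<theta>. (hessian F (elem_diff \<tau> f 0) (elem_diff \<theta> f 0) \<noteq> 0
                    \<longleftrightarrow> ((\<tau>, \<theta>) = (u, v) \<or> (\<tau>, \<theta>) = (v, u))))"
proof -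
  define S where "S = subtrees u \<union> subtrees v"
  have "card S \<le> CARD('n)"
    using card_Un_le[of "subtrees u" "subtrees v"] card_subtrees_le[of u] card_subtrees_le[of v] assms
    unfolding S_def by linarith
  then obtain idx :: "tree \<Rightarrow> 'n" where inj: "inj_on idx S"
    using card_le_inj[of S "UNIV :: 'n set"] finite_subtrees unfolding S_def by auto
  \<comment> \<open>Off \<open>idx ` S\<close> the choice of \<open>B\<close> is arbitrary: those components never enter a coordinate \<open>idx s\<close>.\<close>
  define B where "B i = (case inv_into S idx i of Node C \<Rightarrow> image_mset idx C)" for i
  define f where "f = monomial_field B"
  have pos: "0 \<le> elem_diff \<tau> f 0 $ idx s \<and> (0 < elem_diff \<tau> f 0 $ idx s \<longleftrightarrow> \<tau> = s)"
    if "s \<in> {u, v}" for \<tau> s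
    unfolding f_def
  proof (rule elem_diff_monomial_field_at_0)
    show "c \<in> S" if "Node C \<in> S" "c \<in># C" for C c
      using that subtrees_child_closed unfolding S_def by blast
    show "B (idx (Node C)) = image_mset idx C" if "Node C \<in> S" for C
      using that inj by (simp add: B_def)
    show "s \<in> S"
      using that subtrees_refl unfolding S_def by blast
  qed
  have "hessian (monomial {#idx u, idx v#}) (elem_diff \<tau> f 0) (elem_diff \<theta> f 0) \<noteq> 0
      \<longleftrightarrow> (\<tau>, \<theta>) = (u, v) \<or> (\<tau>, \<theta>) = (v, u)" for \<tau> \<theta>
    using pos[of u \<tau>] pos[of v \<tau>] pos[of u \<theta>] pos[of v \<theta>]
    by (auto simp: hessian_monomial_pair add_mult_nonneg_eq_0_iff)
  then show ?thesis
    using smooth_monomial_field quadratic_functional_monomial_pair unfolding f_def by blast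
qed

end
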